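(* The theory $\mathcal{T}+\mathrm{IND}(\mathrm{Literal}(\mathcal{T}))$ proves the (universal closures of the) formulas $x\neq0\to x=s(p(x))$, $x+y=y+x$, $(x+y)+z=x+(y+z)$, and $x+y=x+z\to y=z$.
   Context: Language $\{0/0,s/1,p/1,+/2\}$; $\mathcal{T}$ has axioms (universally closed) $0\neq s(x)$, $p(0)=0$, $p(s(x))=x$, $x+0=x$, $x+s(y)=s(x+y)$. $\mathrm{Literal}(\mathcal{T})$ is the set of literals (atoms and negated atoms) of this language. $I_x\varphi=\forall\vec z(\varphi(0,\vec z)\wedge\forall x(\varphi(x,\vec z)\to\varphi(s(x),\vec z))\to\forall x\varphi(x,\vec z))$ and $\mathrm{IND}(\Gamma)=\{I_x\gamma:\gamma\in\Gamma\}$. *)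

theory Defs
  imports Main
begin

datatype trm = Var nat | Zero | S trm | P trm | Plus trm trm

datatype fm = Eq trm trm | Neg fm | Conj fm fm | Imp fm fm | All nat fm

text \<open>Substitution of a term for a variable.  It is only ever applied to
  quantifier-free formulas (literals), where it is capture free; under a binder
  of the same variable it stops.\<close>

fun subst_t :: "nat \<Rightarrow> trm \<Rightarrow> trm \<Rightarrow> trm" where
  "subst_t x r (Var y) = (if y = x then r else Var y)"
| "subst_t x r Zero = Zero"
| "subst_t x r (S t) = S (subst_t x r t)"
| "subst_t x r (P t) = P (subst_t x r t)"
| "subst_t x r (Plus t u) = Plus (subst_t x r t) (subst_t x r u)"

fun subst :: "nat \<Rightarrow> trm \<Rightarrow> fm \<Rightarrow> fm" where
  "subst x r (Eq t u) = Eq (subst_t x r t) (subst_t x r u)"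
| "subst x r (Neg f) = Neg (subst x r f)"
| "subst x r (Conj f g) = Conj (subst x r f) (subst x r g)"
| "subst x r (Imp f g) = Imp (subst x r f) (subst x r g)"
| "subst x r (All y f) = (if y = x then All y f else All y (subst x r f))"

record 'a struc =
  zer :: 'a
  suc :: "'a \<Rightarrow> 'a"
  prd :: "'a \<Rightarrow> 'a"
  pls :: "'a \<Rightarrow> 'a \<Rightarrow> 'a"

fun eval :: "'a struc \<Rightarrow> (nat \<Rightarrow> 'a) \<Rightarrow> trm \<Rightarrow> 'a" where
  "eval M e (Var x) = e x"
| "eval M e Zero = zer M"
| "eval M e (S t) = suc M (eval M e t)"
| "eval M e (P t) = prd M (eval M e t)"
| "eval M e (Plus t u) = pls M (eval M e t) (eval M e u)"

fun sat :: "'a struc \<Rightarrow> (nat \<Rightarrow> 'a) \<Rightarrow> fm \<Rightarrow> bool" where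
  "sat M e (Eq t u) = (eval M e t = eval M e u)"
| "sat M e (Neg f) = (\<not> sat M e f)"
| "sat M e (Conj f g) = (sat M e f \<and> sat M e g)"
| "sat M e (Imp f g) = (sat M e f \<longrightarrow> sat M e g)"
| "sat M e (All x f) = (\<forall>a. sat M (e(x := a)) f)"

definition valid :: "'a struc \<Rightarrow> fm \<Rightarrow> bool" where
  "valid M f \<longleftrightarrow> (\<forall>e. sat M e f)"

text \<open>Used with 'a universally quantified at theorem level;
  by Goedel's completeness theorem this is provability.\<close>
definition entails :: "'a itself \<Rightarrow> fm set \<Rightarrow> fm \<Rightarrow> bool" where
  "entails _ \<Gamma> f \<longleftrightarrow> (\<forall>M :: 'a struc. (\<forall>g\<in>\<Gamma>. valid M g) \<longrightarrow> valid M f)"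

abbreviation "vx \<equiv> Var 0"
abbreviation "vy \<equiv> Var 1"
abbreviation "vz \<equiv> Var 2"

definition T_ax :: "fm set" where
  "T_ax = { Neg (Eq Zero (S vx)),
            Eq (P Zero) Zero,
            Eq (P (S vx)) vx,
            Eq (Plus vx Zero) vx,
            Eq (Plus vx (S vy)) (S (Plus vx vy)) }"

definition is_literal :: "fm \<Rightarrow> bool" where
  "is_literal f \<longleftrightarrow> (\<exists>t u. f = Eq t u \<or> f = Neg (Eq t u))"

definition Literal :: "fm set" where
  "Literal = {f. is_literal f}"

text \<open>I_x phi; the outer universal closure over the parameters z is implicit in
  the semantics of validity.\<close>
definition Ind :: "nat \<Rightarrow> fm \<Rightarrow> fm" where
  "Ind x f = Imp (Conj (subst x Zero f) (All x (Imp f (subst x (S (Var x)) f)))) (All x f)"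

definition IND :: "fm set \<Rightarrow> fm set" where
  "IND \<Gamma> = {Ind x g | x g. g \<in> \<Gamma>}"

end

theory Submission
  imports Defs
begin

text \<open>Commutativity of addition needs the two auxiliary laws 0 + a = a and
  s(b) + a = s(b + a), each by induction on a.  The predecessor law and
  cancellation are obtained contrapositively: if z \<noteq> s(p z), the literal x \<noteq> z
  is inductive in x, so z \<noteq> z; and if y \<noteq> z, the literal y + x \<noteq> z + x is
  inductive in x, because s is injective (p is a left inverse).\<close>

lemma eval_subst_t: "eval M e (subst_t x r t) = eval M (e(x := eval M e r)) t"
  by (induction t) auto

lemma sat_subst_literal:
  assumes "is_literal f"
  shows "sat M e (subst x r f) = sat M (e(x := eval M e r)) f"
  using assms by (auto simp: is_literal_def eval_subst_t)

locale literal_induction_model =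
  fixes M :: "'a struc"
  assumes models: "\<forall>g \<in> T_ax \<union> IND Literal. valid M g"
begin

lemma literal_induct:
  assumes "is_literal f"
    and "sat M (e(x := zer M)) f"
    and "\<And>a. sat M (e(x := a)) f \<Longrightarrow> sat M (e(x := suc M a)) f"
  shows "sat M (e(x := a)) f"
proof -
  have "Ind x f \<in> IND Literal"
    using assms(1) unfolding IND_def Literal_def by blast
  then have "sat M e (Ind x f)"
    using models by (auto simp: valid_def)
  then show ?thesis
    using assms by (simp add: Ind_def sat_subst_literal)
qed

lemma eq_induct:
  assumes "eval M (e(x := zer M)) t = eval M (e(x := zer M)) u"
    and "\<And>a. eval M (e(x := a)) t = eval M (e(x := a)) u \<Longrightarrow>
             eval M (e(x := suc M a)) t = eval M (e(x := suc M a)) u"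
  shows "eval M (e(x := a)) t = eval M (e(x := a)) u"
  using literal_induct[of "Eq t u"] assms by (simp add: is_literal_def)

lemma neq_induct:
  assumes "eval M (e(x := zer M)) t \<noteq> eval M (e(x := zer M)) u"
    and "\<And>a. eval M (e(x := a)) t \<noteq> eval M (e(x := a)) u \<Longrightarrow>
             eval M (e(x := suc M a)) t \<noteq> eval M (e(x := suc M a)) u"
  shows "eval M (e(x := a)) t \<noteq> eval M (e(x := a)) u"
  using literal_induct[of "Neg (Eq t u)"] assms by (simp add: is_literal_def)

lemma T_axioms:
  shows zero_neq_suc: "zer M \<noteq> suc M a"
    and prd_zero: "prd M (zer M) = zer M"
    and prd_suc: "prd M (suc M a) = a"
    and pls_zero: "pls M a (zer M) = a"
    and pls_suc: "pls M a (suc M b) = suc M (pls M a b)"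
proof -
  let ?e = "(\<lambda>_. b)(0 := a)"
  have "sat M ?e f" if "f \<in> T_ax" for f
    using models that by (auto simp: valid_def)
  then have "sat M ?e (Neg (Eq Zero (S vx)))" "sat M ?e (Eq (P Zero) Zero)"
      "sat M ?e (Eq (P (S vx)) vx)" "sat M ?e (Eq (Plus vx Zero) vx)"
      "sat M ?e (Eq (Plus vx (S vy)) (S (Plus vx vy)))"
    unfolding T_ax_def by blast+
  then show "zer M \<noteq> suc M a" "prd M (zer M) = zer M" "prd M (suc M a) = a"
      "pls M a (zer M) = a" "pls M a (suc M b) = suc M (pls M a b)"
    by simp_all
qed

lemma suc_inject: "suc M a = suc M b \<longleftrightarrow> a = b"
  by (metis prd_suc)

lemma suc_prd:
  assumes "z \<noteq> zer M"
  shows "z = suc M (prd M z)"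
proof (rule ccontr)
  assume not_suc: "z \<noteq> suc M (prd M z)"
  have "eval M ((\<lambda>_. z)(0 := z)) vx \<noteq> eval M ((\<lambda>_. z)(0 := z)) vy"
  proof (rule neq_induct)
    fix a
    assume "eval M ((\<lambda>_. z)(0 := a)) vx \<noteq> eval M ((\<lambda>_. z)(0 := a)) vy"
    then show "eval M ((\<lambda>_. z)(0 := suc M a)) vx \<noteq> eval M ((\<lambda>_. z)(0 := suc M a)) vy"
      using not_suc prd_suc by auto
  qed (use assms in simp)
  then show False
    by simp
qed

lemma zero_pls: "pls M (zer M) a = a"
  using eq_induct[of "\<lambda>_. a" 0 "Plus Zero vx" vx a] by (simp add: pls_zero pls_suc)

lemma suc_pls: "pls M (suc M b) a = suc M (pls M b a)"
  using eq_induct[of "\<lambda>_. b" 0 "Plus (S vy) vx" "S (Plus vy vx)" a]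
  by (simp add: pls_zero pls_suc)

lemma pls_commute: "pls M b a = pls M a b"
  using eq_induct[of "\<lambda>_. b" 0 "Plus vy vx" "Plus vx vy" a]
  by (simp add: pls_zero pls_suc zero_pls suc_pls)

lemma pls_assoc: "pls M (pls M a b) c = pls M a (pls M b c)"
  using eq_induct[of "(\<lambda>_. b)(1 := a)" 0 "Plus (Plus vy vz) vx" "Plus vy (Plus vz vx)" c]
  by (simp add: pls_zero pls_suc)

lemma pls_right_cancel:
  assumes "pls M b a = pls M c a"
  shows "b = c"
proof (rule ccontr)
  let ?e = "(\<lambda>_. c)(1 := b)"
  assume "b \<noteq> c"
  have "eval M (?e(0 := a)) (Plus vy vx) \<noteq> eval M (?e(0 := a)) (Plus vz vx)"
  proof (rule neq_induct)
    fix a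
    assume "eval M (?e(0 := a)) (Plus vy vx) \<noteq> eval M (?e(0 := a)) (Plus vz vx)"
    then show "eval M (?e(0 := suc M a)) (Plus vy vx) \<noteq> eval M (?e(0 := suc M a)) (Plus vz vx)"
      by (simp add: pls_suc suc_inject)
  qed (use \<open>b \<noteq> c\<close> in \<open>simp add: pls_zero\<close>)
  then show False
    using assms by simp
qed

lemma pls_left_cancel: "pls M a b = pls M a c \<Longrightarrow> b = c"
  using pls_right_cancel[of b a c] pls_commute[of a b] pls_commute[of a c] by simp

end

theorem lemma19:
  shows "entails TYPE('a) (T_ax \<union> IND Literal) (Imp (Neg (Eq vx Zero)) (Eq vx (S (P vx))))
       \<and> entails TYPE('a) (T_ax \<union> IND Literal) (Eq (Plus vx vy) (Plus vy vx))
       \<and> entails TYPE('a) (T_ax \<union> IND Literal) (Eq (Plus (Plus vx vy) vz) (Plus vx (Plus vy vz)))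
       \<and> entails TYPE('a) (T_ax \<union> IND Literal) (Imp (Eq (Plus vx vy) (Plus vx vz)) (Eq vy vz))"
  unfolding entails_def valid_def[of _ "Imp _ _"] valid_def[of _ "Eq _ _"]
proof (intro conjI allI impI)
  fix M :: "'a struc" and e
  assume "\<forall>g \<in> T_ax \<union> IND Literal. valid M g"
  then interpret literal_induction_model M
    by unfold_locales
  show "sat M e (Imp (Neg (Eq vx Zero)) (Eq vx (S (P vx))))"
    using suc_prd[of "e 0"] by simp
  show "sat M e (Eq (Plus vx vy) (Plus vy vx))"
    using pls_commute[of "e 1" "e 0"] by simp
  show "sat M e (Eq (Plus (Plus vx vy) vz) (Plus vx (Plus vy vz)))"
    using pls_assoc[of "e 0" "e 1" "e 2"] by simp
  show "sat M e (Imp (Eq (Plus vx vy) (Plus vx vz)) (Eq vy vz))"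
    using pls_left_cancel[of "e 0" "e 1" "e 2"] by simp
qed

end
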